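(* For all $w,v\in\mathbb{C}$: $S_n(w;v)$ remains bounded as real $n\to\infty$ if and only if $w\in\mathcal{X}\cup\mathcal{Y}\cup\mathcal{S}$. Also (for $w\neq0$) $T_n(w;v)$ remains bounded as $n\to\infty$ if and only if $w\in\mathcal{X}\cup\mathcal{Z}\cup\mathcal{T}$.
   Context: Principal logarithm branch (arguments in $(-\pi,\pi]$); $(nw)^{-(n+v)}=e^{-(n+v)\log n}e^{-(n+v)\log w}$. For real $n>0$ with $\mathrm{Re}(n+v)>-1$: $S_n(w;v)=1+nw\int_0^1 e^{nw(1-z)}z^{n+v}\,dz$ and, for $w\ne0$, $T_n(w;v)=e^{nw}(nw)^{-(n+v)}\Gamma(n+v+1)-S_n(w;v)$. Regions: $\mathcal{X}=\{w:|we^{1-w}|>1\}$; $\mathcal{Y}=\{w:|we^{1-w}|<1,\mathrm{Re}(w)<1\}$; $\mathcal{Z}=\{w:|we^{1-w}|<1,\mathrm{Re}(w)>1\}$; $\mathcal{S}=\{w:|we^{1-w}|=1,\mathrm{Re}(w)<1\}$; $\mathcal{T}=\{w:|we^{1-w}|=1,\mathrm{Re}(w)>1\}$ (the point $w=1$ lies in none of them). *)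

theory Defs
  imports "HOL-Analysis.Analysis"
begin

definition S_fun :: "real \<Rightarrow> complex \<Rightarrow> complex \<Rightarrow> complex" where
  "S_fun n w v = 1 + of_real n * w *
     integral {0..1} (\<lambda>z::real. exp (of_real n * w * (1 - of_real z)) * (of_real z) powr (of_real n + v))"

text \<open>T_n(w;v) = e^{nw} (nw)^{-(n+v)} Gamma(n+v+1) - S_n(w;v),
  with (nw)^{-(n+v)} = e^{-(n+v) log n} e^{-(n+v) Log w}.\<close>
definition T_fun :: "real \<Rightarrow> complex \<Rightarrow> complex \<Rightarrow> complex" where
  "T_fun n w v = exp (of_real n * w) * exp (- (of_real n + v) * of_real (ln n))
     * exp (- (of_real n + v) * Ln w) * Gamma (of_real n + v + 1) - S_fun n w v"

definition regX :: "complex set" where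
  "regX = {w. norm (w * exp (1 - w)) > 1}"
definition regY :: "complex set" where
  "regY = {w. norm (w * exp (1 - w)) < 1 \<and> Re w < 1}"
definition regZ :: "complex set" where
  "regZ = {w. norm (w * exp (1 - w)) < 1 \<and> Re w > 1}"
definition regS :: "complex set" where
  "regS = {w. norm (w * exp (1 - w)) = 1 \<and> Re w < 1}"
definition regT :: "complex set" where
  "regT = {w. norm (w * exp (1 - w)) = 1 \<and> Re w > 1}"

end

theory Submission
  imports Defs "HOL-Complex_Analysis.Complex_Analysis" "HOL-Real_Asymp.Real_Asymp"
begin

(* Write g_n(t) = e^{nw(1-t)} t^{n+v}, so that S_n = 1 + nw \<integral>_0^1 g_n, and let
   F_n = e^{nw} (nw)^{-(n+v)} Gamma(n+v+1) = S_n + T_n.  For Re w > 0, rotating the contour of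
   Euler's integral gives F_n = nw \<integral>_0^\<infinity> g_n, hence T_n = nw \<integral>_1^\<infinity> g_n - 1.

   Since |g_n(t)| \<le> e^{(n(1 - Re w) + Re v)(t - 1)}, S_n is bounded when Re w < 1 and T_n is
   bounded when Re w > 1.  On the line Re w = 1, |g_n(t)| = e^{(n + Re v)(1 - t + ln t) + Re v (t - 1)}
   is concentrated near t = 1: for w \<noteq> 1 an integration by parts still bounds S_n, while for
   w = 1 this peak contributes at least c \<surd>n to the real parts of both S_n and T_n.

   Finally |F_n(w)| = |F_n(1)| |e^{-v Log w}| |w e^{1-w}|^{-n} with c \<surd>n \<le> |F_n(1)| \<le> C n, so F_n
   is bounded iff |w e^{1-w}| > 1.  Where one of S_n, T_n is known to be bounded, the other one is
   therefore bounded iff |w e^{1-w}| > 1. *)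

lemma ln_less_minus_one:
  fixes x :: real
  assumes "0 < x" "x \<noteq> 1"
  shows "ln x < x - 1"
  using ln_le_minus_one[OF assms(1)] ln_eq_minus_one[OF assms(1)] assms(2) by fastforce

lemma ln_ge_near_one:
  fixes t :: real
  assumes "\<bar>t - 1\<bar> \<le> 1/2"
  shows "t - 1 - 2 * (t - 1)^2 \<le> ln t"
proof (cases "t \<le> 1")
  case True
  have "- (1 - t) - 2 * (1 - t)^2 \<le> ln (1 - (1 - t))"
    by (rule ln_one_minus_pos_lower_bound) (use True assms in auto)
  then show ?thesis by (simp add: power2_commute)
next
  case False
  have "(t - 1) - (t - 1)^2 \<le> ln (1 + (t - 1))"
    by (rule ln_one_plus_pos_lower_bound) (use False assms in auto)
  then have "t - 1 - (t - 1)^2 \<le> ln t" by simp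
  then show ?thesis using zero_le_power2[of "t - 1"] by linarith
qed

lemma abs_ln_le_near_one:
  fixes t :: real
  assumes "\<bar>t - 1\<bar> \<le> 1/2"
  shows "\<bar>ln t\<bar> \<le> 2 * \<bar>t - 1\<bar>"
proof -
  have "(t - 1)^2 = \<bar>t - 1\<bar> * \<bar>t - 1\<bar>" by (simp add: power2_eq_square)
  also have "\<dots> \<le> 1/2 * \<bar>t - 1\<bar>" using assms by (intro mult_right_mono) auto
  finally have "t - 1 - \<bar>t - 1\<bar> \<le> ln t" using ln_ge_near_one[OF assms] by argo
  moreover have "ln t \<le> t - 1" using assms by (intro ln_le_minus_one) linarith
  ultimately show ?thesis by (auto simp: abs_le_iff abs_if)
qed

lemma cos_ge_half:
  fixes x :: real
  assumes "\<bar>x\<bar> \<le> 1"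
  shows "1/2 \<le> cos x"
proof -
  have "cos (pi / 3) \<le> cos \<bar>x\<bar>"
    using assms pi_gt3 by (intro cos_monotone_0_pi_le) auto
  then show ?thesis by (simp add: cos_60)
qed

lemma one_minus_add_ln_le_tangent:
  fixes s t :: real
  assumes "0 < s" "0 < t"
  shows "1 - t + ln t \<le> 1 - s + ln s + (t - s) * (1 / s - 1)"
proof -
  have "(t - s) * (1 / s - 1) = (t - s) / s - (t - s)" using assms by (simp add: field_simps)
  then show ?thesis using ln_diff_le[OF assms(2,1)] by linarith
qed

lemma mult_le_abs_if_abs_le_one:
  fixes a x :: real
  assumes "\<bar>x\<bar> \<le> 1"
  shows "a * x \<le> \<bar>a\<bar>"
proof -
  have "\<bar>a\<bar> * \<bar>x\<bar> \<le> \<bar>a\<bar>" using assms by (intro mult_left_le) auto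
  then show ?thesis using abs_ge_self[of "a * x"] unfolding abs_mult by linarith
qed

lemma inverse_sqrt_le:
  fixes d n :: real
  assumes "0 < d" "1 / d^2 \<le> n"
  shows "1 / sqrt n \<le> d"
proof -
  have "0 < n" using assms by (smt (verit) divide_pos_pos zero_less_power)
  moreover have "1 / d \<le> sqrt n" using assms by (intro real_le_rsqrt) (simp add: power_divide)
  ultimately show ?thesis using assms by (simp add: divide_le_eq field_simps)
qed

lemma eventually_mult_exp_le_1:
  fixes q r s :: real
  assumes "q < 0"
  shows "\<forall>\<^sub>F n in at_top. n * exp ((n + r) * q + s) \<le> 1"
proof -
  have "((\<lambda>n. n * exp ((n + r) * q + s)) \<longlongrightarrow> 0) at_top" using assms by real_asymp
  from order_tendstoD(2)[OF this, of 1] show ?thesis by (auto elim: eventually_mono)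
qed

lemma integral_exp_le:
  fixes lam c :: real
  assumes "lam \<noteq> 0" "a \<le> b" and nonpos: "\<And>t. t \<in> {a..b} \<Longrightarrow> lam * (t - c) \<le> 0"
  shows "integral {a..b} (\<lambda>t. exp (lam * (t - c))) \<le> 1 / \<bar>lam\<bar>"
proof -
  have "((\<lambda>t. exp (lam * (t - c))) has_integral exp (lam * (b - c)) / lam - exp (lam * (a - c)) / lam) {a..b}"
    using assms(1,2) by (intro fundamental_theorem_of_calculus)
      (auto intro!: derivative_eq_intros simp: has_real_derivative_iff_has_vector_derivative[symmetric])
  then have "integral {a..b} (\<lambda>t. exp (lam * (t - c))) = (exp (lam * (b - c)) - exp (lam * (a - c))) / lam"
    by (simp add: integral_unique diff_divide_distrib)
  also have "\<dots> \<le> \<bar>exp (lam * (b - c)) - exp (lam * (a - c))\<bar> / \<bar>lam\<bar>"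
    by (metis abs_divide abs_ge_self)
  also have "\<dots> \<le> 1 / \<bar>lam\<bar>"
  proof (intro divide_right_mono)
    have "exp (lam * (b - c)) \<le> 1" "exp (lam * (a - c)) \<le> 1"
      using nonpos[of a] nonpos[of b] assms(2) by auto
    then show "\<bar>exp (lam * (b - c)) - exp (lam * (a - c))\<bar> \<le> 1"
      using exp_gt_zero[of "lam * (b - c)"] exp_gt_zero[of "lam * (a - c)"] by linarith
  qed simp
  finally show ?thesis .
qed

lemma Re_integral:
  fixes f :: "'a::euclidean_space \<Rightarrow> complex"
  assumes "f integrable_on S"
  shows "Re (integral S f) = integral S (\<lambda>x. Re (f x))"
  using integral_unique[OF has_integral_Re[OF integrable_integral[OF assms]]] by simp

lemma Re_integral_ge_subinterval:
  fixes f :: "real \<Rightarrow> complex"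
  assumes f: "f integrable_on {a..b}" and cd: "a \<le> c" "c \<le> d" "d \<le> b"
    and nonneg: "\<And>t. t \<in> {a..b} \<Longrightarrow> 0 \<le> Re (f t)"
    and ge: "\<And>t. t \<in> {c..d} \<Longrightarrow> C \<le> Re (f t)"
  shows "(d - c) * C \<le> Re (integral {a..b} f)"
proof -
  let ?g = "\<lambda>t. Re (f t)"
  have g: "?g integrable_on {x..y}" if "a \<le> x" "y \<le> b" for x y
  proof -
    have "f integrable_on {x..y}" using f that by (intro integrable_on_subinterval) auto
    then show ?thesis using integrable_linear[OF _ bounded_linear_Re] by (simp add: o_def)
  qed
  have "integral {a..b} ?g = integral {a..c} ?g + integral {c..d} ?g + integral {d..b} ?g"
    using cd g by (simp add: Henstock_Kurzweil_Integration.integral_combine)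
  moreover have "0 \<le> integral {a..c} ?g" "0 \<le> integral {d..b} ?g"
    using cd g nonneg by (auto intro!: integral_nonneg)
  moreover have "(d - c) * C \<le> integral {c..d} ?g"
    using integral_le[OF integrable_const_ivl g[of c d], of C] cd ge by auto
  ultimately show ?thesis using Re_integral[OF f] by simp
qed

lemma Bfun_iff_eventually_norm_le:
  fixes f :: "'a \<Rightarrow> 'b::real_normed_vector"
  shows "Bfun f F \<longleftrightarrow> (\<exists>B. \<forall>\<^sub>F x in F. norm (f x) \<le> B)"
  by (metis BfunE BfunI)

lemma Bfun_add:
  fixes f g :: "'a \<Rightarrow> 'b::real_normed_vector"
  assumes "Bfun f F" "Bfun g F"
  shows "Bfun (\<lambda>x. f x + g x) F"
proof -
  obtain A B where "\<forall>\<^sub>F x in F. norm (f x) \<le> A" "\<forall>\<^sub>F x in F. norm (g x) \<le> B"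
    using assms by (auto elim!: BfunE)
  then have "\<forall>\<^sub>F x in F. norm (f x + g x) \<le> A + B"
    by eventually_elim (rule order_trans[OF norm_triangle_ineq add_mono])
  then show ?thesis by (rule BfunI)
qed

lemma Bfun_add_iff:
  fixes f g :: "'a \<Rightarrow> 'b::real_normed_vector"
  assumes "Bfun g F"
  shows "Bfun (\<lambda>x. f x + g x) F \<longleftrightarrow> Bfun f F"
proof
  assume "Bfun (\<lambda>x. f x + g x) F"
  moreover have "Bfun (\<lambda>x. - g x) F" using assms by (simp add: Bfun_def)
  ultimately show "Bfun f F" using Bfun_add by fastforce
qed (use Bfun_add assms in blast)

lemma not_Bfun_if_filterlim_norm:
  fixes f :: "'a \<Rightarrow> 'b::real_normed_vector"
  assumes "filterlim (\<lambda>x. norm (f x)) at_top F" "F \<noteq> bot"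
  shows "\<not> Bfun f F"
proof
  assume "Bfun f F"
  then obtain B where "\<forall>\<^sub>F x in F. norm (f x) \<le> B" by (auto elim: BfunE)
  moreover have "\<forall>\<^sub>F x in F. B < norm (f x)" using assms(1) by (simp add: filterlim_at_top_dense)
  ultimately have "\<forall>\<^sub>F x in F. False" by eventually_elim auto
  with assms(2) show False by (simp add: eventually_False)
qed

lemma filterlim_norm_if_filterlim_Re:
  fixes f :: "'a \<Rightarrow> complex"
  assumes "filterlim (\<lambda>x. Re (f x)) at_top F"
  shows "filterlim (\<lambda>x. norm (f x)) at_top F"
  using assms by (rule filterlim_at_top_mono) (simp add: complex_Re_le_cmod)

section \<open>Euler's integral along a ray\<close>

lemma tendsto_Gamma_integral:
  fixes z :: complex
  assumes "0 < Re z"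
  shows "((\<lambda>R. integral {0..R} (\<lambda>t. of_real t powr (z - 1) / of_real (exp t))) \<longlongrightarrow> Gamma z) at_top"
proof -
  define f where "f = (\<lambda>t::real. of_real t powr (z - 1) / of_real (exp t))"
  have "f absolutely_integrable_on {0<..}"
    unfolding f_def by (rule absolutely_integrable_Gamma_integral'[OF assms])
  moreover have "f absolutely_integrable_on {0<..} \<longleftrightarrow> f absolutely_integrable_on {0..}"
    by (rule absolutely_integrable_spike_set_eq) (auto intro: negligible_subset[of "{0}"])
  ultimately have f: "f absolutely_integrable_on {0..}" by simp
  have "set_lebesgue_integral lebesgue {0..} f = Gamma z"
    using set_lebesgue_integral_eq_integral(2)[OF f] Gamma_integral_complex[OF assms]
    by (simp add: f_def integral_unique)
  moreover have "set_lebesgue_integral lebesgue {0..R} f = integral {0..R} f" for R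
    by (rule set_lebesgue_integral_eq_integral(2), rule set_integrable_subset[OF f]) auto
  moreover have "((\<lambda>R. set_lebesgue_integral lebesgue {0..R} f)
                    \<longlongrightarrow> set_lebesgue_integral lebesgue {0..} f) at_top"
    by (rule tendsto_set_lebesgue_integral_at_top) (use f in auto)
  ultimately show ?thesis by (simp add: f_def)
qed

lemma contour_integral_triangle_eq_0:
  fixes f :: "complex \<Rightarrow> complex"
  assumes S: "convex S" "continuous_on S f" and K: "finite K" "f analytic_on S - K"
    and pqr: "p \<in> S" "q \<in> S" "r \<in> S"
  shows "contour_integral (linepath p q) f + contour_integral (linepath q r) f
           + contour_integral (linepath r p) f = 0"
proof -
  have hull: "convex hull {p, q, r} \<subseteq> S" using S pqr by (intro hull_minimal) auto
  have "(f has_contour_integral 0) (linepath p q +++ linepath q r +++ linepath r p)"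
  proof (rule Cauchy_theorem_triangle_cofinite[OF continuous_on_subset[OF S(2) hull] K(1)])
    fix x assume "x \<in> interior (convex hull {p, q, r}) - K"
    then have "x \<in> S - K" using hull interior_subset by blast
    then show "f field_differentiable at x" using K(2) analytic_on_imp_differentiable_at by blast
  qed
  moreover have "f contour_integrable_on linepath x y" if "x \<in> S" "y \<in> S" for x y
    using that S by (intro contour_integrable_continuous_linepath continuous_on_subset[OF S(2)]
                       closed_segment_subset)
  then have "(f has_contour_integral contour_integral (linepath p q) f + (contour_integral (linepath q r) f
               + contour_integral (linepath r p) f)) (linepath p q +++ linepath q r +++ linepath r p)"
    using pqr by (intro has_contour_integral_join has_contour_integral_integral) auto
  ultimately show ?thesis using has_contour_integral_unique by (simp add: add.assoc)
qed

lemma norm_powr_le: "norm (z powr c) \<le> norm z powr Re c * exp (\<bar>Im c\<bar> * pi)"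
proof -
  have "\<bar>Arg z\<bar> \<le> pi" using Arg_bounded[of z] by (simp add: abs_le_iff)
  then have "\<bar>Im c\<bar> * \<bar>Arg z\<bar> \<le> \<bar>Im c\<bar> * pi" by (rule mult_left_mono) simp
  then have "- Im c * Arg z \<le> \<bar>Im c\<bar> * pi"
    by (metis abs_ge_minus_self abs_mult order_trans mult_minus_left)
  then show ?thesis unfolding norm_powr_complex by (intro mult_left_mono) auto
qed

lemma continuous_on_powr_exp:
  fixes c :: complex
  assumes "0 < Re c"
  shows "continuous_on {z. 0 \<le> Re z} (\<lambda>z. z powr c * exp (- z))"
  using assms by (intro continuous_intros) auto

lemma analytic_on_powr_exp: "(\<lambda>z. z powr c * exp (- z)) analytic_on {z. 0 \<le> Re z} - {0}"
proof -
  have "z \<notin> \<real>\<^sub>\<le>\<^sub>0" if "0 \<le> Re z" "z \<noteq> 0" for z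
    using that by (auto simp: complex_nonpos_Reals_iff complex_eq_iff)
  then show ?thesis by (intro analytic_intros) auto
qed

lemma contour_integral_radial_powr_exp:
  fixes a c :: complex and X :: real
  assumes a: "0 < Re a" and c: "0 < Re c" and X: "0 < X"
  shows "contour_integral (linepath 0 (of_real X * a)) (\<lambda>z. z powr c * exp (- z))
           = a powr (c + 1) * integral {0..X} (\<lambda>t. exp (- (a * of_real t)) * of_real t powr c)"
proof -
  define f where "f z = z powr c * exp (- z)" for z
  define h where "h t = exp (- (a * of_real t)) * of_real t powr c" for t
  let ?b = "of_real X * a"
  have "closed_segment 0 ?b \<subseteq> {z. 0 \<le> Re z}"
    using a X by (intro closed_segment_subset convex_halfspace_Re_ge) auto
  then have "f contour_integrable_on linepath 0 ?b"
    unfolding f_def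
    by (intro contour_integrable_continuous_linepath continuous_on_subset[OF continuous_on_powr_exp[OF c]])
  then have "((\<lambda>u. f (linepath 0 ?b u) * ?b) has_integral contour_integral (linepath 0 ?b) f) {0..1}"
    using has_contour_integral_integral has_contour_integral_linepath by fastforce
  moreover have "f (linepath 0 ?b u) * ?b = a powr (c + 1) * (of_real X * h (X * u))" if "u \<in> {0..1}" for u
  proof -
    have "linepath 0 ?b u = of_real (X * u) * a" by (simp add: linepath_def scaleR_conv_of_real)
    moreover have "(of_real (X * u) * a) powr c = of_real (X * u) powr c * a powr c"
      using that X by (intro powr_times_real_left) auto
    ultimately have "f (linepath 0 ?b u) * ?b
        = (a powr c * a) * (of_real X * (exp (- (a * of_real (X * u))) * of_real (X * u) powr c))"
      unfolding f_def by (simp only: ac_simps)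
    then show ?thesis by (simp only: h_def powr_add powr_to_1)
  qed
  ultimately have "((\<lambda>u. a powr (c + 1) * (of_real X * h (X * u))) has_integral contour_integral (linepath 0 ?b) f) {0..1}"
    by (metis (no_types, lifting) has_integral_cong)
  then have "contour_integral (linepath 0 ?b) f = integral {0..1} (\<lambda>u. a powr (c + 1) * (of_real X * h (X * u)))"
    by (rule integral_unique[symmetric])
  also have "\<dots> = a powr (c + 1) * (of_real X * integral {0..1} (\<lambda>u. h (X * u)))"
    by simp
  also have "integral {0..1} (\<lambda>u. h (X * u)) = (1 / X) *\<^sub>R integral {0..X} h"
  proof -
    have "(\<lambda>x. x / X) ` {0..X} = {0..1}" using X by (simp add: image_divide_atLeastAtMost)
    then show ?thesis using integral_stretch_real[where m = X and f = h and a = 0 and b = X] X by simp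
  qed
  also have "of_real X * ((1 / X) *\<^sub>R integral {0..X} h) = integral {0..X} h"
    using X by (simp add: scaleR_conv_of_real)
  finally show ?thesis by (simp only: f_def[abs_def] h_def[abs_def])
qed

lemma Re_norm_in_vertical_segment:
  fixes u z :: complex
  assumes u: "Re u = 1" and R: "0 \<le> R" and z_seg: "z \<in> closed_segment (of_real R) (of_real R * u)"
  shows "Re z = R \<and> norm z \<le> R * norm u"
proof -
  obtain s where s: "0 \<le> s" "s \<le> 1" and z: "z = (1 - s) *\<^sub>R of_real R + s *\<^sub>R (of_real R * u)"
    using z_seg by (metis in_segment(1))
  have "norm z \<le> (1 - s) * R + s * (R * norm u)"
    using z s R norm_triangle_ineq[of "(1 - s) *\<^sub>R of_real R" "s *\<^sub>R (of_real R * u)"]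
    by (simp add: norm_mult)
  also have "\<dots> \<le> (1 - s) * (R * norm u) + s * (R * norm u)"
    using complex_Re_le_cmod[of u] u s R mult_left_mono[of 1 "norm u" R] by (intro add_right_mono mult_left_mono) auto
  also have "\<dots> = R * norm u" by (simp add: algebra_simps)
  finally have "norm z \<le> R * norm u" .
  moreover have "Re z = (1 - s) * R + s * R" unfolding z using u by simp
  ultimately show ?thesis by (simp add: algebra_simps)
qed

lemma norm_contour_integral_vertical_powr_exp_le:
  fixes c u :: complex
  assumes u: "Re u = 1" and c: "0 \<le> Re c" and R: "0 < R"
  shows "norm (contour_integral (linepath (of_real R) (of_real R * u)) (\<lambda>z. z powr c * exp (- z)))
           \<le> (R * norm u) powr Re c * exp (\<bar>Im c\<bar> * pi) * exp (- R) * (R * norm (u - 1))"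
proof -
  define f where "f = (\<lambda>z::complex. z powr c * exp (- z))"
  have seg: "Re z = R \<and> norm z \<le> R * norm u" if "z \<in> closed_segment (of_real R) (of_real R * u)" for z
    using Re_norm_in_vertical_segment[OF u _ that] R by simp
  have "continuous_on (closed_segment (of_real R) (of_real R * u)) f"
    unfolding f_def by (intro continuous_intros) (use seg R in fastforce)+
  then have "(f has_contour_integral contour_integral (linepath (of_real R) (of_real R * u)) f)
               (linepath (of_real R) (of_real R * u))"
    by (intro has_contour_integral_integral contour_integrable_continuous_linepath)
  then have "norm (contour_integral (linepath (of_real R) (of_real R * u)) f)
               \<le> (R * norm u) powr Re c * exp (\<bar>Im c\<bar> * pi) * exp (- R) * norm (of_real R * u - of_real R)"
  proof (rule has_contour_integral_bound_linepath)
    fix z assume "z \<in> closed_segment (of_real R) (of_real R * u)"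
    with seg have z: "Re z = R" "norm z \<le> R * norm u" by auto
    have "norm (f z) \<le> norm z powr Re c * exp (\<bar>Im c\<bar> * pi) * exp (- R)"
      unfolding f_def using norm_powr_le[of z c] z by (simp add: norm_mult norm_exp_eq_Re)
    also have "\<dots> \<le> (R * norm u) powr Re c * exp (\<bar>Im c\<bar> * pi) * exp (- R)"
      using z c by (intro mult_right_mono powr_mono2) auto
    finally show "norm (f z) \<le> (R * norm u) powr Re c * exp (\<bar>Im c\<bar> * pi) * exp (- R)" .
  qed simp
  also have "of_real R * u - of_real R = of_real R * (u - 1)" by (simp add: algebra_simps)
  finally show ?thesis using R by (simp add: f_def norm_mult)
qed

lemma tendsto_contour_integral_vertical_powr_exp:
  fixes c u :: complex
  assumes u: "Re u = 1" and c: "0 \<le> Re c"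
  shows "((\<lambda>R. contour_integral (linepath (of_real R) (of_real R * u)) (\<lambda>z. z powr c * exp (- z)))
           \<longlongrightarrow> 0) at_top"
proof (rule tendsto_norm_zero_cancel[OF Lim_null_comparison])
  show "\<forall>\<^sub>F R in at_top. norm (norm (contour_integral (linepath (of_real R) (of_real R * u)) (\<lambda>z. z powr c * exp (- z))))
          \<le> (R * norm u) powr Re c * exp (\<bar>Im c\<bar> * pi) * exp (- R) * (R * norm (u - 1))"
    using eventually_gt_at_top[of 0]
    by eventually_elim (simp add: norm_contour_integral_vertical_powr_exp_le[OF u c])
  have "norm u > 0" using u by auto
  then show "((\<lambda>R. (R * norm u) powr Re c * exp (\<bar>Im c\<bar> * pi) * exp (- R) * (R * norm (u - 1))) \<longlongrightarrow> 0) at_top"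
    by real_asymp
qed
lemma integral_exp_powr_eq_contour_integrals:
  fixes a c :: complex
  assumes a: "0 < Re a" and c: "0 < Re c" and R: "0 < R"
  defines "f \<equiv> \<lambda>z. z powr c * exp (- z)" and "u \<equiv> a / of_real (Re a)"
  shows "a powr (c + 1) * integral {0..R / Re a} (\<lambda>t. exp (- (a * of_real t)) * of_real t powr c)
           = contour_integral (linepath 0 (of_real R)) f + contour_integral (linepath (of_real R) (of_real R * u)) f"
proof -
  have u: "Re u = 1" using a by (simp add: u_def)
  have Ru: "of_real R * u = of_real (R / Re a) * a" using a by (simp add: u_def)
  have "contour_integral (linepath 0 (of_real R)) f + contour_integral (linepath (of_real R) (of_real R * u)) f
          + contour_integral (linepath (of_real R * u) 0) f = 0"
    unfolding f_def
    using R u by (intro contour_integral_triangle_eq_0[of "{z. 0 \<le> Re z}" _ "{0}"]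
                   convex_halfspace_Re_ge continuous_on_powr_exp[OF c] analytic_on_powr_exp) auto
  moreover have "contour_integral (linepath (of_real R * u) 0) f = - contour_integral (linepath 0 (of_real R * u)) f"
  proof (rule contour_integral_reverse_linepath)
    have "closed_segment (of_real R * u) 0 \<subseteq> {z. 0 \<le> Re z}"
      using u R by (intro closed_segment_subset convex_halfspace_Re_ge) auto
    then show "continuous_on (closed_segment (of_real R * u) 0) f"
      unfolding f_def by (rule continuous_on_subset[OF continuous_on_powr_exp[OF c]])
  qed
  moreover have "contour_integral (linepath 0 (of_real R * u)) f
                   = a powr (c + 1) * integral {0..R / Re a} (\<lambda>t. exp (- (a * of_real t)) * of_real t powr c)"
    unfolding Ru f_def using a c R by (intro contour_integral_radial_powr_exp) auto
  ultimately show ?thesis by (simp add: algebra_simps)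
qed

lemma tendsto_contour_integral_real_powr_exp:
  fixes c :: complex
  assumes c: "0 < Re c"
  shows "((\<lambda>R. contour_integral (linepath 0 (of_real R)) (\<lambda>z. z powr c * exp (- z))) \<longlongrightarrow> Gamma (c + 1)) at_top"
proof (rule Lim_transform_eventually[OF tendsto_Gamma_integral])
  show "0 < Re (c + 1)" using c by simp
  show "\<forall>\<^sub>F R in at_top. integral {0..R} (\<lambda>t. of_real t powr (c + 1 - 1) / of_real (exp t))
          = contour_integral (linepath 0 (of_real R)) (\<lambda>z. z powr c * exp (- z))"
    using eventually_gt_at_top[of 0]
  proof eventually_elim
    case (elim R)
    then show ?case using contour_integral_linepath_Reals_eq[of 0 "of_real R"]
      by (simp add: exp_minus exp_of_real divide_inverse)
  qed
qed

lemma tendsto_integral_exp_powr: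
  fixes a c :: complex
  assumes a: "0 < Re a" and c: "0 < Re c"
  shows "((\<lambda>X. integral {0..X} (\<lambda>t. exp (- (a * of_real t)) * of_real t powr c))
           \<longlongrightarrow> Gamma (c + 1) / a powr (c + 1)) at_top"
proof -
  define f where "f = (\<lambda>z::complex. z powr c * exp (- z))"
  define I where "I X = integral {0..X} (\<lambda>t. exp (- (a * of_real t)) * of_real t powr c)" for X
  define u where "u = a / of_real (Re a)"
  have u: "Re u = 1" using a by (simp add: u_def)
  have "((\<lambda>R. contour_integral (linepath 0 (of_real R)) f
               + contour_integral (linepath (of_real R) (of_real R * u)) f) \<longlongrightarrow> Gamma (c + 1)) at_top"
    using tendsto_add[OF tendsto_contour_integral_real_powr_exp[OF c]
                         tendsto_contour_integral_vertical_powr_exp[OF u less_imp_le[OF c]]]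
    by (simp add: f_def)
  then have "((\<lambda>R. a powr (c + 1) * I (R / Re a)) \<longlongrightarrow> Gamma (c + 1)) at_top"
  proof (rule Lim_transform_eventually)
    show "\<forall>\<^sub>F R in at_top. contour_integral (linepath 0 (of_real R)) f
            + contour_integral (linepath (of_real R) (of_real R * u)) f = a powr (c + 1) * I (R / Re a)"
      using eventually_gt_at_top[of 0] unfolding I_def f_def u_def
      by eventually_elim (rule integral_exp_powr_eq_contour_integrals[OF a c, symmetric])
  qed
  moreover have "filterlim (\<lambda>X. Re a * X) at_top at_top" using a by real_asymp
  ultimately have "((\<lambda>X. a powr (c + 1) * I (Re a * X / Re a)) \<longlongrightarrow> Gamma (c + 1)) at_top"
    by (rule filterlim_compose)
  moreover have a0: "a powr (c + 1) \<noteq> 0"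
    using a by (auto simp: powr_def)
  ultimately have "((\<lambda>X. a powr (c + 1) * I X / a powr (c + 1)) \<longlongrightarrow> Gamma (c + 1) / a powr (c + 1)) at_top"
    using a by (intro tendsto_divide tendsto_const) auto
  then have "(I \<longlongrightarrow> Gamma (c + 1) / a powr (c + 1)) at_top"
    by (simp only: nonzero_mult_div_cancel_left[OF a0])
  then show ?thesis by (simp only: I_def[abs_def])
qed

definition S_integrand :: "real \<Rightarrow> complex \<Rightarrow> complex \<Rightarrow> real \<Rightarrow> complex" where
  "S_integrand n w v t = exp (of_real n * w * (1 - of_real t)) * of_real t powr (of_real n + v)"

definition F_fun :: "real \<Rightarrow> complex \<Rightarrow> complex \<Rightarrow> complex" where
  "F_fun n w v = exp (of_real n * w) * exp (- (of_real n + v) * of_real (ln n))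
     * exp (- (of_real n + v) * Ln w) * Gamma (of_real n + v + 1)"

lemma S_fun_eq_integral: "S_fun n w v = 1 + of_real n * w * integral {0..1} (S_integrand n w v)"
  unfolding S_fun_def S_integrand_def by simp

lemma S_fun_add_T_fun: "S_fun n w v + T_fun n w v = F_fun n w v"
  unfolding T_fun_def F_fun_def by simp

lemma norm_S_integrand:
  assumes "0 \<le> t"
  shows "norm (S_integrand n w v t) = exp (n * Re w * (1 - t)) * t powr (n + Re v)"
  using assms unfolding S_integrand_def by (simp add: norm_mult norm_exp_eq_Re norm_powr_real_powr)

lemma norm_S_integrand_le:
  assumes t: "0 \<le> t" and nv: "0 \<le> n + Re v"
  shows "norm (S_integrand n w v t) \<le> exp ((n * (1 - Re w) + Re v) * (t - 1))"
proof (cases "t = 0")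
  case True
  then show ?thesis by (simp add: S_integrand_def)
next
  case False
  then have "ln t \<le> t - 1" using t by (intro ln_le_minus_one) auto
  then have "t powr (n + Re v) \<le> exp ((n + Re v) * (t - 1))"
    using False t nv by (simp add: powr_def mult_left_mono)
  then have "norm (S_integrand n w v t) \<le> exp (n * Re w * (1 - t)) * exp ((n + Re v) * (t - 1))"
    unfolding norm_S_integrand[OF t] by (rule mult_left_mono) simp
  also have "\<dots> = exp (n * Re w * (1 - t) + (n + Re v) * (t - 1))"
    by (simp add: exp_add)
  also have "n * Re w * (1 - t) + (n + Re v) * (t - 1) = (n * (1 - Re w) + Re v) * (t - 1)"
    by (simp add: algebra_simps)
  finally show ?thesis .
qed

lemma continuous_on_S_integrand:
  assumes "0 < n + Re v"
  shows "continuous_on {0..} (S_integrand n w v)"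
  unfolding S_integrand_def using assms by (intro continuous_intros) auto

lemma S_integrand_integrable_on:
  assumes "0 < n + Re v" "0 \<le> a"
  shows "S_integrand n w v integrable_on {a..b}"
  using assms continuous_on_subset[OF continuous_on_S_integrand[OF assms(1)], of "{a..b}"]
  by (intro integrable_continuous_real) auto

lemma integral_S_integrand_combine:
  assumes "0 < n + Re v" "0 \<le> a" "a \<le> b" "b \<le> c"
  shows "integral {a..c} (S_integrand n w v) = integral {a..b} (S_integrand n w v) + integral {b..c} (S_integrand n w v)"
  using assms S_integrand_integrable_on[OF assms(1)]
  by (intro Henstock_Kurzweil_Integration.integral_combine[symmetric]) auto

lemma F_fun_eq_Gamma_div_powr:
  fixes w v :: complex
  assumes n: "0 < n" and w: "w \<noteq> 0"
  defines "a \<equiv> of_real n * w" and "c \<equiv> of_real n + v"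
  shows "F_fun n w v = a * exp a * (Gamma (c + 1) / a powr (c + 1))"
proof -
  have a0: "a \<noteq> 0" using n w by (simp add: a_def)
  have "Ln a = of_real (ln n) + Ln w"
    using Ln_times_of_real[OF n w] n by (simp add: a_def Ln_of_real)
  then have "a powr c = exp (c * (of_real (ln n) + Ln w))"
    using a0 by (simp add: powr_def)
  then have "F_fun n w v = exp a / a powr c * Gamma (c + 1)"
    unfolding F_fun_def a_def c_def
    by (simp add: exp_minus[symmetric] exp_add[symmetric] divide_inverse algebra_simps exp_minus)
  also have "\<dots> = a * exp a * (Gamma (c + 1) / a powr (c + 1))"
    using a0 by (simp add: powr_add field_simps)
  finally show ?thesis .
qed

lemma tendsto_F_fun_integral:
  assumes n: "0 < n" and w: "0 < Re w" and nv: "0 < n + Re v"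
  shows "((\<lambda>X. of_real n * w * integral {0..X} (S_integrand n w v)) \<longlongrightarrow> F_fun n w v) at_top"
proof -
  define a where "a = of_real n * w"
  define c where "c = of_real n + v"
  have a: "0 < Re a" using n w by (simp add: a_def)
  have c: "0 < Re c" using nv by (simp add: c_def)
  have "S_integrand n w v = (\<lambda>t. exp a * (exp (- (a * of_real t)) * of_real t powr c))"
    by (auto simp: S_integrand_def a_def c_def algebra_simps simp flip: exp_add)
  then have "of_real n * w * integral {0..X} (S_integrand n w v)
               = a * exp a * integral {0..X} (\<lambda>t. exp (- (a * of_real t)) * of_real t powr c)" for X
    by (simp add: a_def)
  moreover have "((\<lambda>X. a * exp a * integral {0..X} (\<lambda>t. exp (- (a * of_real t)) * of_real t powr c))
                   \<longlongrightarrow> a * exp a * (Gamma (c + 1) / a powr (c + 1))) at_top"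
    by (intro tendsto_mult_left tendsto_integral_exp_powr a c)
  moreover have "F_fun n w v = a * exp a * (Gamma (c + 1) / a powr (c + 1))"
    using n w unfolding a_def c_def by (intro F_fun_eq_Gamma_div_powr) auto
  ultimately show ?thesis by simp
qed

lemma tendsto_T_fun_integral:
  assumes n: "0 < n" and w: "0 < Re w" and nv: "0 < n + Re v"
  shows "((\<lambda>X. of_real n * w * integral {1..X} (S_integrand n w v)) \<longlongrightarrow> T_fun n w v + 1) at_top"
proof (rule Lim_transform_eventually)
  let ?J = "of_real n * w * integral {0..1} (S_integrand n w v)"
  have "T_fun n w v + 1 = F_fun n w v - ?J"
    using S_fun_add_T_fun[of n w v] by (simp add: S_fun_eq_integral algebra_simps)
  then show "((\<lambda>X. of_real n * w * integral {0..X} (S_integrand n w v) - ?J) \<longlongrightarrow> T_fun n w v + 1) at_top"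
    using tendsto_F_fun_integral[OF assms] by (simp add: tendsto_diff)
  show "\<forall>\<^sub>F X in at_top. of_real n * w * integral {0..X} (S_integrand n w v) - ?J
                        = of_real n * w * integral {1..X} (S_integrand n w v)"
    using eventually_ge_at_top[of 1]
  proof eventually_elim
    case (elim X)
    then have "integral {0..X} (S_integrand n w v) = integral {0..1} (S_integrand n w v) + integral {1..X} (S_integrand n w v)"
      by (intro integral_S_integrand_combine[OF nv]) auto
    then show ?case by (simp add: distrib_left)
  qed
qed

section \<open>Boundedness off the line Re w = 1\<close>

lemma norm_integral_S_integrand_le:
  assumes n: "0 \<le> n" "0 < n + Re v" and ab: "0 \<le> a" "a \<le> b"
    and lam: "n * (1 - Re w) + Re v \<noteq> 0" "\<And>t. t \<in> {a..b} \<Longrightarrow> (n * (1 - Re w) + Re v) * (t - 1) \<le> 0"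
  shows "norm (of_real n * w * integral {a..b} (S_integrand n w v)) \<le> n * norm w / \<bar>n * (1 - Re w) + Re v\<bar>"
proof -
  let ?lam = "n * (1 - Re w) + Re v"
  have "norm (integral {a..b} (S_integrand n w v)) \<le> integral {a..b} (\<lambda>t. exp (?lam * (t - 1)))"
  proof (rule integral_norm_bound_integral)
    show "S_integrand n w v integrable_on {a..b}" using n ab by (intro S_integrand_integrable_on) auto
    show "(\<lambda>t. exp (?lam * (t - 1))) integrable_on {a..b}"
      by (intro integrable_continuous_real continuous_intros)
    show "norm (S_integrand n w v t) \<le> exp (?lam * (t - 1))" if "t \<in> {a..b}" for t
      using that n ab by (intro norm_S_integrand_le) auto
  qed
  also have "\<dots> \<le> 1 / \<bar>?lam\<bar>" using lam ab by (intro integral_exp_le) auto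
  finally have "n * norm w * norm (integral {a..b} (S_integrand n w v)) \<le> n * norm w * (1 / \<bar>?lam\<bar>)"
    using n by (intro mult_left_mono) auto
  then show ?thesis using n by (simp add: norm_mult)
qed

lemma Bfun_S_fun_if_Re_less_1:
  assumes w: "Re w < 1"
  shows "Bfun (\<lambda>n. S_fun n w v) at_top"
proof -
  define lam where "lam n = n * (1 - Re w) + Re v" for n
  define C where "C = norm w / (1 - Re w) + 1"
  have "filterlim lam at_top at_top" using w unfolding lam_def by real_asymp
  then have lam_pos: "\<forall>\<^sub>F n in at_top. 0 < lam n" by (simp add: filterlim_at_top_dense)
  have "((\<lambda>n. n * norm w / lam n) \<longlongrightarrow> norm w / (1 - Re w)) at_top"
    using w unfolding lam_def by (real_asymp simp add: divide_inverse)
  then have ratio: "\<forall>\<^sub>F n in at_top. n * norm w / lam n < C"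
    unfolding C_def by (rule order_tendstoD) simp
  have "\<forall>\<^sub>F n in at_top. norm (S_fun n w v) \<le> 1 + C"
    using lam_pos ratio eventually_gt_at_top[of 0] eventually_gt_at_top[of "- Re v"]
  proof eventually_elim
    case (elim n)
    have "norm (of_real n * w * integral {0..1} (S_integrand n w v)) \<le> n * norm w / \<bar>lam n\<bar>"
      unfolding lam_def
    proof (rule norm_integral_S_integrand_le)
      show "(n * (1 - Re w) + Re v) * (t - 1) \<le> 0" if "t \<in> {0..1}" for t
        using elim that by (intro mult_nonneg_nonpos) (auto simp: lam_def)
    qed (use elim in \<open>auto simp: lam_def\<close>)
    then show ?case
      using elim norm_triangle_ineq[of 1 "of_real n * w * integral {0..1} (S_integrand n w v)"]
      unfolding S_fun_eq_integral by simp
  qed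
  then show ?thesis by (rule BfunI)
qed

lemma Bfun_T_fun_if_Re_greater_1:
  assumes w: "1 < Re w"
  shows "Bfun (\<lambda>n. T_fun n w v) at_top"
proof -
  define lam where "lam n = n * (1 - Re w) + Re v" for n
  define C where "C = norm w / (Re w - 1) + 1"
  have "filterlim (\<lambda>n. - lam n) at_top at_top" using w unfolding lam_def by real_asymp
  then have lam_neg: "\<forall>\<^sub>F n in at_top. lam n < 0"
    unfolding filterlim_at_top_dense by (metis (mono_tags) eventually_mono neg_0_less_iff_less)
  have "((\<lambda>n. n * norm w / - lam n) \<longlongrightarrow> norm w / (Re w - 1)) at_top"
    using w unfolding lam_def by (real_asymp simp add: divide_inverse)
  then have ratio: "\<forall>\<^sub>F n in at_top. n * norm w / - lam n < C"
    unfolding C_def by (rule order_tendstoD) simp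
  have "\<forall>\<^sub>F n in at_top. norm (T_fun n w v) \<le> C + 1"
    using lam_neg ratio eventually_gt_at_top[of 0] eventually_gt_at_top[of "- Re v"]
  proof eventually_elim
    case (elim n)
    have "norm (of_real n * w * integral {1..X} (S_integrand n w v)) \<le> C" if X: "1 \<le> X" for X
    proof -
      have "norm (of_real n * w * integral {1..X} (S_integrand n w v)) \<le> n * norm w / \<bar>lam n\<bar>"
        unfolding lam_def
      proof (rule norm_integral_S_integrand_le)
        show "(n * (1 - Re w) + Re v) * (t - 1) \<le> 0" if "t \<in> {1..X}" for t
          using elim that by (intro mult_nonpos_nonneg) (auto simp: lam_def)
      qed (use elim X in \<open>auto simp: lam_def\<close>)
      also have "\<dots> \<le> C" using elim by simp
      finally show ?thesis .
    qed
    then have "norm (T_fun n w v + 1) \<le> C"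
      using elim w
      by (intro tendsto_upperbound[OF tendsto_norm[OF tendsto_T_fun_integral]] eventually_mono[OF eventually_ge_at_top[of 1]]) auto
    then show ?case using norm_triangle_ineq4[of "T_fun n w v + 1" 1] by simp
  qed
  then show ?thesis by (rule BfunI)
qed

section \<open>The line Re w = 1\<close>

lemma norm_S_integrand_Re_1:
  assumes "Re w = 1" "0 < t"
  shows "norm (S_integrand n w v t) = exp ((n + Re v) * (1 - t + ln t) + Re v * (t - 1))"
proof -
  have "norm (S_integrand n w v t) = exp (n * (1 - t) + (n + Re v) * ln t)"
    using assms by (simp add: norm_S_integrand powr_def exp_add)
  also have "n * (1 - t) + (n + Re v) * ln t = (n + Re v) * (1 - t + ln t) + Re v * (t - 1)"
    by (simp add: algebra_simps)
  finally show ?thesis .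
qed

lemma norm_S_integrand_Re_1_le:
  assumes "Re w = 1" "0 \<le> t" "t \<le> 2" "0 \<le> n + Re v"
  shows "norm (S_integrand n w v t) \<le> exp \<bar>Re v\<bar>"
proof -
  have "norm (S_integrand n w v t) \<le> exp (Re v * (t - 1))"
    using norm_S_integrand_le[of t n v w] assms by simp
  also have "\<dots> \<le> exp \<bar>Re v\<bar>"
    using assms by (simp add: mult_le_abs_if_abs_le_one)
  finally show ?thesis .
qed

lemma norm_S_integrand_Re_1_le_head:
  assumes w: "Re w = 1" and t: "0 \<le> t" "t \<le> s" and s: "s \<le> 1" and nv: "0 \<le> n + Re v"
  shows "norm (S_integrand n w v t) \<le> exp \<bar>Re v\<bar> * exp ((n + Re v) * (1 - s + ln s))"
proof (cases "t = 0")
  case True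
  then show ?thesis by (simp add: S_integrand_def)
next
  case False
  then have t0: "0 < t" using t by simp
  have "1 - t + ln t \<le> 1 - s + ln s + (t - s) * (1 / s - 1)"
    using t0 t by (intro one_minus_add_ln_le_tangent) auto
  also have "(t - s) * (1 / s - 1) \<le> 0"
    using t0 t s by (intro mult_nonpos_nonneg) auto
  finally have "(n + Re v) * (1 - t + ln t) \<le> (n + Re v) * (1 - s + ln s)"
    using nv by (intro mult_left_mono) auto
  moreover have "Re v * (t - 1) \<le> \<bar>Re v\<bar>"
    using t s by (intro mult_le_abs_if_abs_le_one) auto
  ultimately show ?thesis
    using norm_S_integrand_Re_1[OF w t0, of n v] by (simp add: add.commute flip: exp_add)
qed

lemma norm_integral_S_integrand_Re_1_tail_le:
  assumes w: "Re w = 1" and nv: "0 < n + Re v" and s: "1 < s" "s \<le> X"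
    and mu: "1 \<le> (n + Re v) * (1 - 1 / s) - Re v"
  shows "norm (integral {s..X} (S_integrand n w v)) \<le> exp ((n + Re v) * (1 - s + ln s) + Re v * (s - 1))"
proof -
  define A where "A = (n + Re v) * (1 - s + ln s) + Re v * (s - 1)"
  define m where "m = (n + Re v) * (1 - 1 / s) - Re v"
  have "norm (integral {s..X} (S_integrand n w v)) \<le> integral {s..X} (\<lambda>t. exp A * exp (- m * (t - s)))"
  proof (rule integral_norm_bound_integral)
    show "S_integrand n w v integrable_on {s..X}" using nv s by (intro S_integrand_integrable_on) auto
    show "(\<lambda>t. exp A * exp (- m * (t - s))) integrable_on {s..X}"
      by (intro integrable_continuous_real continuous_intros)
    fix t assume "t \<in> {s..X}"
    then have t: "s \<le> t" "0 < t" using s by auto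
    have "(n + Re v) * (1 - t + ln t) \<le> (n + Re v) * (1 - s + ln s + (t - s) * (1 / s - 1))"
      using nv s t by (intro mult_left_mono one_minus_add_ln_le_tangent) auto
    moreover have "(n + Re v) * (1 - s + ln s + (t - s) * (1 / s - 1)) + Re v * (t - 1) = A - m * (t - s)"
      using s by (simp add: A_def m_def field_simps)
    ultimately have "(n + Re v) * (1 - t + ln t) + Re v * (t - 1) \<le> A + - m * (t - s)"
      by linarith
    then show "norm (S_integrand n w v t) \<le> exp A * exp (- m * (t - s))"
      using norm_S_integrand_Re_1[OF w t(2), of n v] by (simp flip: exp_add)
  qed
  also have "\<dots> = exp A * integral {s..X} (\<lambda>t. exp (- m * (t - s)))" by simp
  also have "\<dots> \<le> exp A * (1 / \<bar>- m\<bar>)"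
    using mu s by (intro mult_left_mono integral_exp_le) (auto simp: m_def intro!: mult_nonpos_nonneg)
  also have "\<dots> \<le> exp A * 1"
    using mu by (intro mult_left_mono) (auto simp: m_def)
  finally show ?thesis by (simp add: A_def)
qed

lemma has_field_derivative_exp_powr_quotient:
  fixes a c z0 :: complex
  assumes z0: "z0 \<notin> \<real>\<^sub>\<le>\<^sub>0" and D: "c - a * z0 \<noteq> 0"
  shows "((\<lambda>z. exp (a * (1 - z)) * z powr c * z / (c - a * z)) has_field_derivative
           (exp (a * (1 - z0)) * z0 powr c * (1 + c / (c - a * z0)^2))) (at z0)"
proof -
  have z00: "z0 \<noteq> 0" using z0 by auto
  have Zm: "z0 powr (c - 1) * z0 = z0 powr c"
    using z00 by (simp add: powr_diff powr_one)
  have d1: "((\<lambda>z. exp (a * (1 - z))) has_field_derivative (exp (a * (1 - z0)) * (- a))) (at z0)"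
    by (auto intro!: derivative_eq_intros)
  have d2: "((\<lambda>z. z powr c) has_field_derivative (c * z0 powr (c - 1))) (at z0)"
    by (rule has_field_derivative_powr[OF z0])
  have d3: "((\<lambda>z. z / (c - a * z)) has_field_derivative (c / (c - a * z0)^2)) (at z0)"
  proof -
    have "((\<lambda>z. z / (c - a * z)) has_field_derivative ((1 * (c - a * z0) - z0 * (0 - a * 1)) / (c - a * z0)^2)) (at z0)"
      using DERIV_divide[OF DERIV_ident DERIV_diff[OF DERIV_const DERIV_cmult[OF DERIV_ident]] D]
      by (simp add: power2_eq_square)
    then show ?thesis by (simp add: algebra_simps)
  qed
  have "((\<lambda>z. exp (a * (1 - z)) * z powr c * (z / (c - a * z))) has_field_derivative
      ((exp (a * (1 - z0)) * (- a) * z0 powr c + exp (a * (1 - z0)) * (c * z0 powr (c - 1))) * (z0 / (c - a * z0))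
       + exp (a * (1 - z0)) * z0 powr c * (c / (c - a * z0)^2))) (at z0)"
    using DERIV_mult[OF DERIV_mult[OF d1 d2] d3] by (simp add: algebra_simps)
  moreover have "(exp (a * (1 - z0)) * (- a) * z0 powr c + exp (a * (1 - z0)) * (c * z0 powr (c - 1))) * (z0 / (c - a * z0))
      = exp (a * (1 - z0)) * z0 powr c * ((- a * z0 + c) / (c - a * z0))"
    using Zm by (simp add: field_simps)
  moreover have "(- a * z0 + c) / (c - a * z0) = 1" using D by (simp add: field_simps)
  ultimately show ?thesis by (simp add: algebra_simps mult.assoc)
qed

lemma integral_S_integrand_by_parts:
  fixes n :: real and w v :: complex
  defines "a \<equiv> of_real n * w" and "c \<equiv> of_real n + v"
  assumes nv: "0 < n + Re v" and ab: "0 < \<alpha>" "\<alpha> \<le> \<beta>"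
    and D0: "\<And>t. t \<in> {\<alpha>..\<beta>} \<Longrightarrow> c - a * of_real t \<noteq> 0"
  defines "P \<equiv> \<lambda>t. S_integrand n w v t * of_real t / (c - a * of_real t)"
  shows "integral {\<alpha>..\<beta>} (S_integrand n w v)
           = P \<beta> - P \<alpha> - integral {\<alpha>..\<beta>} (\<lambda>t. S_integrand n w v t * c / (c - a * of_real t)^2)"
proof -
  let ?Q = "\<lambda>t. S_integrand n w v t * c / (c - a * of_real t)^2"
  have P_eq: "P = (\<lambda>t. (\<lambda>z. exp (a * (1 - z)) * z powr c * z / (c - a * z)) (of_real t))"
    by (simp add: P_def S_integrand_def a_def c_def)
  have "(P has_vector_derivative (S_integrand n w v t * (1 + c / (c - a * of_real t)^2))) (at t within {\<alpha>..\<beta>})"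
    if t: "t \<in> {\<alpha>..\<beta>}" for t
  proof -
    have "of_real t \<notin> \<real>\<^sub>\<le>\<^sub>0" using t ab by (auto simp: complex_nonpos_Reals_iff)
    from has_vector_derivative_real_field[OF has_field_derivative_exp_powr_quotient[OF this D0[OF t]]]
    show ?thesis unfolding P_eq by (simp add: S_integrand_def a_def c_def)
  qed
  then have "((\<lambda>t. S_integrand n w v t * (1 + c / (c - a * of_real t)^2)) has_integral P \<beta> - P \<alpha>) {\<alpha>..\<beta>}"
    using ab by (intro fundamental_theorem_of_calculus) auto
  moreover have "continuous_on {\<alpha>..\<beta>} ?Q"
    using D0 ab by (intro continuous_intros continuous_on_subset[OF continuous_on_S_integrand[OF nv]]) auto
  then have "(?Q has_integral integral {\<alpha>..\<beta>} ?Q) {\<alpha>..\<beta>}"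
    by (intro integrable_integral integrable_continuous_real)
  ultimately have "((\<lambda>t. S_integrand n w v t * (1 + c / (c - a * of_real t)^2) - ?Q t) has_integral
                     P \<beta> - P \<alpha> - integral {\<alpha>..\<beta>} ?Q) {\<alpha>..\<beta>}"
    by (rule has_integral_diff)
  then show ?thesis by (simp add: algebra_simps integral_unique)
qed

lemma norm_denominator_ge:
  fixes n t :: real and v w :: complex
  assumes "1/2 \<le> t" "0 \<le> n" "4 * \<bar>Im v\<bar> \<le> n * \<bar>Im w\<bar>"
  shows "n * \<bar>Im w\<bar> / 4 \<le> norm (of_real n + v - of_real n * w * of_real t)"
proof -
  have "n * \<bar>Im w\<bar> * (1/2) \<le> n * \<bar>Im w\<bar> * t"
    using assms by (intro mult_left_mono) auto
  also have "n * \<bar>Im w\<bar> * t = \<bar>n * t * Im w\<bar>" using assms by (simp add: abs_mult)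
  finally have "n * \<bar>Im w\<bar> / 2 - \<bar>Im v\<bar> \<le> \<bar>Im v - n * t * Im w\<bar>" by linarith
  also have "Im v - n * t * Im w = Im (of_real n + v - of_real n * w * of_real t)" by simp
  finally show ?thesis using assms abs_Im_le_cmod[of "of_real n + v - of_real n * w * of_real t"] by linarith
qed

text \<open>Integrating by parts gains the factor 1 / |n + v - n w t| = O(1/n) on [1/2, 1] when Im w \<noteq> 0.\<close>

lemma norm_integral_S_integrand_Re_1_upper_le:
  assumes w: "Re w = 1" "Im w \<noteq> 0" and n: "1 \<le> n" "1 \<le> n + Re v"
    and v: "4 * \<bar>Im v\<bar> \<le> n * \<bar>Im w\<bar>" "norm v \<le> n"
  defines "L \<equiv> n * \<bar>Im w\<bar> / 4"
  shows "norm (integral {1/2..1} (S_integrand n w v)) \<le> exp \<bar>Re v\<bar> * (2 / L + n / L^2)"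
proof -
  define a where "a = of_real n * w"
  define c where "c = of_real n + v"
  define D where "D t = c - a * of_real t" for t :: real
  define K where "K = exp \<bar>Re v\<bar>"
  have L: "0 < L" using n w by (simp add: L_def)
  have nv: "0 < n + Re v" using n by simp
  have D_ge: "L \<le> norm (D t)" if "t \<in> {1/2..1}" for t
    using norm_denominator_ge[of t n v w] that n v by (simp add: L_def D_def a_def c_def)
  have D0: "of_real n + v - of_real n * w * of_real t \<noteq> 0" if "t \<in> {1/2..1}" for t
    using D_ge[OF that] L by (auto simp: D_def a_def c_def)
  have g_le: "norm (S_integrand n w v t) \<le> K" if "t \<in> {1/2..1}" for t
    using norm_S_integrand_Re_1_le[OF w(1), of t n v] that nv by (simp add: K_def)
  let ?P1 = "S_integrand n w v 1 * of_real 1 / D 1"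
  let ?P2 = "S_integrand n w v (1/2) * of_real (1/2) / D (1/2)"
  let ?I = "integral {1/2..1} (\<lambda>t. S_integrand n w v t * c / (D t)^2)"
  from integral_S_integrand_by_parts[OF nv _ _ D0]
  have ibp: "integral {1/2..1} (S_integrand n w v) = ?P1 - ?P2 - ?I"
    by (simp add: D_def a_def c_def)
  have P_le: "norm (S_integrand n w v t * of_real t / D t) \<le> K / L" if t: "t \<in> {1/2..1}" for t
  proof -
    have "norm (S_integrand n w v t * of_real t / D t) = norm (S_integrand n w v t) * t / norm (D t)"
      using t by (simp add: norm_mult norm_divide)
    also have "\<dots> \<le> K * 1 / L"
      using g_le[OF t] t D_ge[OF t] L by (intro frac_le mult_mono) (auto simp: K_def)
    finally show ?thesis by simp
  qed
  have I_le: "norm ?I \<le> K * (2 * n) / L^2 * (1 - 1/2)"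
  proof (rule integral_bound)
    show "continuous_on {1/2..1} (\<lambda>t. S_integrand n w v t * c / (D t)^2)"
      unfolding D_def using D0
      by (intro continuous_intros continuous_on_subset[OF continuous_on_S_integrand[OF nv]]) (auto simp: a_def c_def)
    fix t :: real assume t: "t \<in> {1/2..1}"
    have "norm c \<le> 2 * n" unfolding c_def using norm_triangle_ineq[of "of_real n" v] n v by simp
    then have "norm (S_integrand n w v t) * norm c / (norm (D t))^2 \<le> K * (2 * n) / L^2"
      using g_le[OF t] n D_ge[OF t] L by (intro frac_le mult_mono power_mono) (auto simp: K_def)
    then show "norm (S_integrand n w v t * c / (D t)^2) \<le> K * (2 * n) / L^2"
      by (simp add: norm_mult norm_divide norm_power)
  qed simp
  have "norm ?P1 \<le> K / L" "norm ?P2 \<le> K / L" by (intro P_le; simp)+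
  moreover have "norm (?P1 - ?P2 - ?I) \<le> norm (?P1 - ?P2) + norm ?I" by (rule norm_triangle_ineq4)
  moreover have "norm (?P1 - ?P2) \<le> norm ?P1 + norm ?P2" by (rule norm_triangle_ineq4)
  ultimately have "norm (integral {1/2..1} (S_integrand n w v)) \<le> K / L + K / L + K * n / L^2"
    unfolding ibp using I_le by simp
  then show ?thesis by (simp add: K_def field_simps)
qed

lemma norm_S_fun_Re_1_le:
  assumes w: "Re w = 1" "Im w \<noteq> 0" and n: "1 \<le> n" "1 \<le> n + Re v"
    and v: "4 * \<bar>Im v\<bar> \<le> n * \<bar>Im w\<bar>" "norm v \<le> n"
  defines "q \<equiv> 1 - 1/2 + ln (1/2::real)" and "b \<equiv> \<bar>Im w\<bar>"
  shows "norm (S_fun n w v) \<le> 1 + norm w * exp \<bar>Re v\<bar> * (n * exp ((n + Re v) * q) / 2 + 8 / b + 16 / b^2)"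
proof -
  define K where "K = exp \<bar>Re v\<bar>"
  have b: "0 < b" using w by (simp add: b_def)
  have nv: "0 < n + Re v" using n by simp
  have head: "norm (integral {0..1/2} (S_integrand n w v)) \<le> K * exp ((n + Re v) * q) * (1/2 - 0)"
  proof (rule integral_bound)
    show "continuous_on {0..1/2} (S_integrand n w v)"
      by (rule continuous_on_subset[OF continuous_on_S_integrand[OF nv]]) auto
    show "norm (S_integrand n w v t) \<le> K * exp ((n + Re v) * q)" if "t \<in> {0..1/2}" for t
      using that n unfolding K_def q_def by (intro norm_S_integrand_Re_1_le_head w) auto
  qed simp
  have upper: "norm (integral {1/2..1} (S_integrand n w v)) \<le> K * (8 / (n * b) + 16 / (n * b^2))"
    using norm_integral_S_integrand_Re_1_upper_le[OF w n v] n b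
    by (simp add: K_def b_def field_simps power2_eq_square)
  have "norm (integral {0..1} (S_integrand n w v)) \<le> K * exp ((n + Re v) * q) / 2 + K * (8 / (n * b) + 16 / (n * b^2))"
    using head upper integral_S_integrand_combine[OF nv, of 0 "1/2" 1]
      norm_triangle_ineq[of "integral {0..1/2} (S_integrand n w v)" "integral {1/2..1} (S_integrand n w v)"]
    by simp
  then have "n * norm w * norm (integral {0..1} (S_integrand n w v))
               \<le> n * norm w * (K * exp ((n + Re v) * q) / 2 + K * (8 / (n * b) + 16 / (n * b^2)))"
    using n by (intro mult_left_mono) auto
  also have "\<dots> = norm w * K * (n * exp ((n + Re v) * q) / 2 + 8 / b + 16 / b^2)"
    using n b by (simp add: field_simps power2_eq_square)
  finally show ?thesis
    unfolding S_fun_eq_integral K_def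
    using n norm_triangle_ineq[of 1 "of_real n * w * integral {0..1} (S_integrand n w v)"]
    by (simp add: norm_mult)
qed

lemma Bfun_S_fun_if_Re_1:
  assumes w: "Re w = 1" "w \<noteq> 1"
  shows "Bfun (\<lambda>n. S_fun n w v) at_top"
proof -
  define b where "b = \<bar>Im w\<bar>"
  have b: "0 < b" "Im w \<noteq> 0" using w by (auto simp: b_def complex_eq_iff)
  define q where "q = 1 - 1/2 + ln (1/2::real)"
  have q: "q < 0" using ln_less_minus_one[of "1/2"] by (simp add: q_def)
  have "\<forall>\<^sub>F n in at_top. norm (S_fun n w v) \<le> 1 + norm w * exp \<bar>Re v\<bar> * (1 / 2 + 8 / b + 16 / b^2)"
    using eventually_mult_exp_le_1[OF q, of "Re v" 0]
      eventually_ge_at_top[of "max 1 (max (1 - Re v) (max (4 * \<bar>Im v\<bar> / b) (norm v)))"]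
  proof eventually_elim
    case (elim n)
    then have "1 \<le> n" "1 \<le> n + Re v" "4 * \<bar>Im v\<bar> \<le> n * \<bar>Im w\<bar>" "norm v \<le> n"
      using b by (auto simp: b_def field_simps)
    from norm_S_fun_Re_1_le[OF w(1) b(2) this]
    have "norm (S_fun n w v) \<le> 1 + norm w * exp \<bar>Re v\<bar> * (n * exp ((n + Re v) * q) / 2 + 8 / b + 16 / b^2)"
      by (simp add: q_def b_def)
    also have "\<dots> \<le> 1 + norm w * exp \<bar>Re v\<bar> * (1 / 2 + 8 / b + 16 / b^2)"
      using elim by (intro add_left_mono mult_left_mono add_right_mono) auto
    finally show ?case .
  qed
  then show ?thesis by (rule BfunI)
qed

section \<open>The point w = 1\<close>

lemma Re_S_integrand_1_ge:
  assumes t: "\<bar>t - 1\<bar> \<le> 1/2" and tv: "2 * \<bar>Im v\<bar> * \<bar>t - 1\<bar> \<le> 1" and n: "0 \<le> n"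
  shows "exp (- \<bar>Re v\<bar>) / 2 * exp (- 2 * n * (t - 1)^2) \<le> Re (S_integrand n 1 v t)"
proof -
  define L where "L = ln t"
  have t0: "0 < t" using abs_le_D2[OF t] by linarith
  have L1: "\<bar>L\<bar> \<le> 2 * \<bar>t - 1\<bar>" using abs_ln_le_near_one[OF t] by (simp add: L_def)
  have L2: "t - 1 - 2 * (t - 1)^2 \<le> L" using ln_ge_near_one[OF t] by (simp add: L_def)
  define Z where "Z = of_real n * (1 - of_real t) + (of_real n + v) * of_real L"
  have "S_integrand n 1 v t = exp Z"
    using t0 by (simp add: S_integrand_def Z_def L_def powr_def Ln_of_real exp_add)
  then have Re_eq: "Re (S_integrand n 1 v t) = exp (n * (1 - t + L) + Re v * L) * cos (Im v * L)"
    by (simp add: Re_exp Z_def algebra_simps)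
  have expo: "- 2 * n * (t - 1)^2 - \<bar>Re v\<bar> \<le> n * (1 - t + L) + Re v * L"
  proof -
    have "n * (- 2 * (t - 1)^2) \<le> n * (1 - t + L)" using L2 n by (intro mult_left_mono) auto
    moreover have "(- Re v) * L \<le> \<bar>- Re v\<bar>" using L1 t by (intro mult_le_abs_if_abs_le_one) auto
    ultimately show ?thesis by simp
  qed
  have cos_half: "1/2 \<le> cos (Im v * L)"
  proof (rule cos_ge_half)
    have "\<bar>Im v * L\<bar> \<le> \<bar>Im v\<bar> * (2 * \<bar>t - 1\<bar>)" unfolding abs_mult using L1 by (intro mult_left_mono) auto
    then show "\<bar>Im v * L\<bar> \<le> 1" using tv by simp
  qed
  have "exp (- 2 * n * (t - 1)^2 - \<bar>Re v\<bar>) * (1/2) \<le> exp (n * (1 - t + L) + Re v * L) * cos (Im v * L)"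
    using expo cos_half by (intro mult_mono) auto
  then show ?thesis unfolding Re_eq by (simp add: exp_diff exp_minus field_simps)
qed

lemma Re_integral_S_integrand_1_ge:
  assumes d: "d \<le> 1/2" "2 * \<bar>Im v\<bar> * d \<le> 1" and n: "1 \<le> n" "0 < n + Re v"
    and ab: "0 \<le> a" "{a..b} \<subseteq> {1 - d..1 + d}"
    and ce: "a \<le> c" "c \<le> e" "e \<le> b" "{c..e} \<subseteq> {1 - 1 / sqrt n..1 + 1 / sqrt n}"
  shows "(e - c) * (exp (- \<bar>Re v\<bar> - 2) / 2) \<le> Re (integral {a..b} (S_integrand n 1 v))"
proof (rule Re_integral_ge_subinterval[OF S_integrand_integrable_on[OF n(2) ab(1)] ce(1-3)])
  have window: "exp (- \<bar>Re v\<bar>) / 2 * exp (- 2 * n * (t - 1)^2) \<le> Re (S_integrand n 1 v t)"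
    if "t \<in> {a..b}" for t
  proof (rule Re_S_integrand_1_ge)
    have "\<bar>t - 1\<bar> \<le> d" using that ab by auto
    then show "\<bar>t - 1\<bar> \<le> 1/2" "2 * \<bar>Im v\<bar> * \<bar>t - 1\<bar> \<le> 1"
      using d order_trans[OF mult_left_mono[of "\<bar>t - 1\<bar>" d "2 * \<bar>Im v\<bar>"]] by auto
  qed (use n in simp)
  show "0 \<le> Re (S_integrand n 1 v t)" if "t \<in> {a..b}" for t
    using window[OF that] by (smt (verit) divide_nonneg_pos exp_gt_zero mult_nonneg_nonneg)
  show "exp (- \<bar>Re v\<bar> - 2) / 2 \<le> Re (S_integrand n 1 v t)" if t: "t \<in> {c..e}" for t
  proof -
    have "\<bar>t - 1\<bar> \<le> 1 / sqrt n" using t ce by auto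
    then have "\<bar>t - 1\<bar>^2 \<le> (1 / sqrt n)^2" by (intro power_mono) auto
    then have "n * (t - 1)^2 \<le> n * (1 / n)" using n by (intro mult_left_mono) (auto simp: power_divide)
    then have "exp (- \<bar>Re v\<bar> - 2) / 2 \<le> exp (- \<bar>Re v\<bar>) / 2 * exp (- 2 * n * (t - 1)^2)"
      using n by (simp add: exp_diff exp_minus field_simps)
    also have "\<dots> \<le> Re (S_integrand n 1 v t)" using t ce by (intro window) auto
    finally show ?thesis .
  qed
qed

lemma Re_S_fun_1_ge:
  assumes d: "0 < d" "d \<le> 1/2" "2 * \<bar>Im v\<bar> * d \<le> 1" and n: "1 \<le> n" "0 < n + Re v" "1 / d^2 \<le> n"
  defines "q \<equiv> 1 - (1 - d) + ln (1 - d)"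
  shows "1 + exp (- \<bar>Re v\<bar> - 2) / 2 * sqrt n - exp \<bar>Re v\<bar> * (n * exp ((n + Re v) * q)) \<le> Re (S_fun n 1 v)"
proof -
  define c0 where "c0 = exp (- \<bar>Re v\<bar> - 2) / 2"
  define K where "K = exp \<bar>Re v\<bar>"
  have head: "norm (integral {0..1 - d} (S_integrand n 1 v)) \<le> K * exp ((n + Re v) * q) * (1 - d - 0)"
  proof (rule integral_bound)
    show "continuous_on {0..1 - d} (S_integrand n 1 v)"
      by (rule continuous_on_subset[OF continuous_on_S_integrand[OF n(2)]]) auto
    show "norm (S_integrand n 1 v t) \<le> K * exp ((n + Re v) * q)" if "t \<in> {0..1 - d}" for t
      using that n d unfolding K_def q_def by (intro norm_S_integrand_Re_1_le_head) auto
  qed (use d in simp)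
  moreover have "K * exp ((n + Re v) * q) * (1 - d - 0) \<le> K * exp ((n + Re v) * q)"
    using d by (intro mult_left_le) (auto simp: K_def)
  ultimately have head': "- (K * exp ((n + Re v) * q)) \<le> Re (integral {0..1 - d} (S_integrand n 1 v))"
    using abs_Re_le_cmod[of "integral {0..1 - d} (S_integrand n 1 v)"] by linarith
  have peak: "(1 - (1 - 1 / sqrt n)) * c0 \<le> Re (integral {1 - d..1} (S_integrand n 1 v))"
    unfolding c0_def using d n inverse_sqrt_le[OF d(1) n(3)] by (intro Re_integral_S_integrand_1_ge) auto
  have "Re (S_fun n 1 v) = 1 + n * (Re (integral {0..1 - d} (S_integrand n 1 v))
                                    + Re (integral {1 - d..1} (S_integrand n 1 v)))"
    using integral_S_integrand_combine[OF n(2), of 0 "1 - d" 1 1] d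
    by (simp add: S_fun_eq_integral)
  also have "\<dots> \<ge> 1 + n * (- (K * exp ((n + Re v) * q)) + (1 / sqrt n) * c0)"
    using head' peak n by (intro add_left_mono mult_left_mono add_mono) auto
  also have "n * (- (K * exp ((n + Re v) * q)) + (1 / sqrt n) * c0) = c0 * (n / sqrt n) - K * (n * exp ((n + Re v) * q))"
    by (simp add: algebra_simps)
  also have "n / sqrt n = sqrt n" using n by (intro real_div_sqrt) auto
  finally show ?thesis by (simp add: c0_def K_def)
qed

lemma filterlim_Re_S_fun_1: "filterlim (\<lambda>n. Re (S_fun n 1 v)) at_top at_top"
proof -
  define d where "d = 1 / (2 * (\<bar>Im v\<bar> + 1))"
  have d: "0 < d" "d \<le> 1/2" "2 * \<bar>Im v\<bar> * d \<le> 1" by (auto simp: d_def field_simps)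
  define q where "q = 1 - (1 - d) + ln (1 - d)"
  have q: "q < 0" using ln_less_minus_one[of "1 - d"] d by (simp add: q_def)
  define c0 where "c0 = exp (- \<bar>Re v\<bar> - 2) / 2"
  have "\<forall>\<^sub>F n in at_top. c0 * sqrt n - exp \<bar>Re v\<bar> \<le> Re (S_fun n 1 v)"
    using eventually_mult_exp_le_1[OF q, of "Re v" 0]
      eventually_ge_at_top[of "max 1 (max (1 - Re v) (1 / d^2))"]
  proof eventually_elim
    case (elim n)
    then have "exp \<bar>Re v\<bar> * (n * exp ((n + Re v) * q)) \<le> exp \<bar>Re v\<bar>"
      by (intro mult_left_le) auto
    moreover have "1 + c0 * sqrt n - exp \<bar>Re v\<bar> * (n * exp ((n + Re v) * q)) \<le> Re (S_fun n 1 v)"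
      unfolding q_def c0_def by (rule Re_S_fun_1_ge[OF d]) (use elim in auto)
    ultimately show ?case by linarith
  qed
  moreover have "filterlim (\<lambda>n. c0 * sqrt n - exp \<bar>Re v\<bar>) at_top at_top"
    unfolding c0_def by real_asymp
  ultimately show ?thesis by (rule filterlim_at_top_mono[rotated])
qed

lemma Re_T_fun_1_ge:
  assumes d: "0 < d" "d \<le> 1/2" "2 * \<bar>Im v\<bar> * d \<le> 1" and n: "1 \<le> n" "0 < n + Re v" "1 / d^2 \<le> n"
    and tail_decay: "1 \<le> (n + Re v) * (1 - 1 / (1 + d)) - Re v"
  defines "q \<equiv> 1 - (1 + d) + ln (1 + d)"
  shows "exp (- \<bar>Re v\<bar> - 2) / 2 * sqrt n - n * exp ((n + Re v) * q + Re v * d) - 1 \<le> Re (T_fun n 1 v)"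
proof -
  define c0 where "c0 = exp (- \<bar>Re v\<bar> - 2) / 2"
  define E where "E = n * exp ((n + Re v) * q + Re v * d)"
  have "c0 * sqrt n - E \<le> Re (of_real n * 1 * integral {1..X} (S_integrand n 1 v))" if X: "1 + d \<le> X" for X
  proof -
    have peak: "(1 + 1 / sqrt n - 1) * c0 \<le> Re (integral {1..1 + d} (S_integrand n 1 v))"
      unfolding c0_def using d n inverse_sqrt_le[OF d(1) n(3)] by (intro Re_integral_S_integrand_1_ge) auto
    have "norm (integral {1 + d..X} (S_integrand n 1 v)) \<le> exp ((n + Re v) * q + Re v * d)"
      using norm_integral_S_integrand_Re_1_tail_le[of 1 n v "1 + d" X] n tail_decay X d
      by (simp add: q_def)
    then have tail: "- exp ((n + Re v) * q + Re v * d) \<le> Re (integral {1 + d..X} (S_integrand n 1 v))"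
      using abs_Re_le_cmod[of "integral {1 + d..X} (S_integrand n 1 v)"] by linarith
    have "Re (of_real n * 1 * integral {1..X} (S_integrand n 1 v))
            = n * (Re (integral {1..1 + d} (S_integrand n 1 v)) + Re (integral {1 + d..X} (S_integrand n 1 v)))"
      using integral_S_integrand_combine[OF n(2), of 1 "1 + d" X 1] X d by simp
    also have "\<dots> \<ge> n * (1 / sqrt n * c0 - exp ((n + Re v) * q + Re v * d))"
      using peak tail n by (intro mult_left_mono) auto
    also have "n * (1 / sqrt n * c0 - exp ((n + Re v) * q + Re v * d)) = c0 * (n / sqrt n) - E"
      by (simp add: E_def algebra_simps)
    also have "n / sqrt n = sqrt n" using n by (intro real_div_sqrt) auto
    finally show ?thesis .
  qed
  then have "c0 * sqrt n - E \<le> Re (T_fun n 1 v + 1)"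
    using n by (intro tendsto_lowerbound[OF tendsto_Re[OF tendsto_T_fun_integral]]
                  eventually_mono[OF eventually_ge_at_top[of "1 + d"]]) auto
  then show ?thesis by (simp add: c0_def E_def)
qed

lemma filterlim_Re_T_fun_1: "filterlim (\<lambda>n. Re (T_fun n 1 v)) at_top at_top"
proof -
  define d where "d = 1 / (2 * (\<bar>Im v\<bar> + 1))"
  have d: "0 < d" "d \<le> 1/2" "2 * \<bar>Im v\<bar> * d \<le> 1" by (auto simp: d_def field_simps)
  define q where "q = 1 - (1 + d) + ln (1 + d)"
  have q: "q < 0" using ln_less_minus_one[of "1 + d"] d by (simp add: q_def)
  define c0 where "c0 = exp (- \<bar>Re v\<bar> - 2) / 2"
  have "0 < 1 - 1 / (1 + d)" using d by simp
  then have "filterlim (\<lambda>n. (n + Re v) * (1 - 1 / (1 + d)) - Re v) at_top at_top" by real_asymp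
  then have tail_decay: "\<forall>\<^sub>F n in at_top. 1 \<le> (n + Re v) * (1 - 1 / (1 + d)) - Re v"
    unfolding filterlim_at_top by blast
  have "\<forall>\<^sub>F n in at_top. c0 * sqrt n - 2 \<le> Re (T_fun n 1 v)"
    using tail_decay eventually_mult_exp_le_1[OF q, of "Re v" "Re v * d"]
      eventually_ge_at_top[of "max 1 (max (1 - Re v) (1 / d^2))"]
  proof eventually_elim
    case (elim n)
    have "c0 * sqrt n - n * exp ((n + Re v) * q + Re v * d) - 1 \<le> Re (T_fun n 1 v)"
      unfolding q_def c0_def by (rule Re_T_fun_1_ge[OF d]) (use elim in auto)
    with elim show ?case by linarith
  qed
  moreover have "filterlim (\<lambda>n. c0 * sqrt n - 2) at_top at_top"
    unfolding c0_def by real_asymp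
  ultimately show ?thesis by (rule filterlim_at_top_mono[rotated])
qed

lemma norm_integral_S_integrand_1_le:
  assumes n: "1 \<le> n" "0 < n + Re v" and tail_decay: "1 \<le> (n + Re v) * (1 - 1 / 2) - Re v"
    and X: "2 \<le> X"
  shows "norm (of_real n * 1 * integral {0..X} (S_integrand n 1 v))
           \<le> 2 * n * exp \<bar>Re v\<bar> + n * exp ((n + Re v) * (1 - 2 + ln 2) + Re v)"
proof -
  have head: "norm (integral {0..2} (S_integrand n 1 v)) \<le> exp \<bar>Re v\<bar> * (2 - 0)"
  proof (rule integral_bound)
    show "continuous_on {0..2} (S_integrand n 1 v)"
      by (rule continuous_on_subset[OF continuous_on_S_integrand[OF n(2)]]) auto
    show "norm (S_integrand n 1 v t) \<le> exp \<bar>Re v\<bar>" if "t \<in> {0..2}" for t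
      using that n by (intro norm_S_integrand_Re_1_le) auto
  qed simp
  have tail: "norm (integral {2..X} (S_integrand n 1 v)) \<le> exp ((n + Re v) * (1 - 2 + ln 2) + Re v)"
    using norm_integral_S_integrand_Re_1_tail_le[of 1 n v 2 X] n tail_decay X by simp
  have "norm (of_real n * 1 * integral {0..X} (S_integrand n 1 v))
          \<le> n * (norm (integral {0..2} (S_integrand n 1 v)) + norm (integral {2..X} (S_integrand n 1 v)))"
    using integral_S_integrand_combine[OF n(2), of 0 2 X 1] X n
      norm_triangle_ineq[of "integral {0..2} (S_integrand n 1 v)" "integral {2..X} (S_integrand n 1 v)"]
    by (simp add: norm_mult mult_left_mono)
  also have "\<dots> \<le> n * (2 * exp \<bar>Re v\<bar>) + n * exp ((n + Re v) * (1 - 2 + ln 2) + Re v)"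
    using head tail n by (simp add: algebra_simps add_mono mult_left_mono)
  finally show ?thesis by simp
qed

lemma norm_F_fun_1_le: "\<forall>\<^sub>F n in at_top. norm (F_fun n 1 v) \<le> 2 * n * exp \<bar>Re v\<bar> + 1"
proof -
  define q where "q = 1 - 2 + ln (2::real)"
  have q: "q < 0" using ln_less_minus_one[of 2] by (simp add: q_def)
  have "filterlim (\<lambda>n. (n + Re v) * (1 - 1 / 2) - Re v) at_top at_top" by real_asymp
  then have tail_decay: "\<forall>\<^sub>F n in at_top. 1 \<le> (n + Re v) * (1 - 1 / 2) - Re v"
    unfolding filterlim_at_top by blast
  show ?thesis
    using tail_decay eventually_mult_exp_le_1[OF q, of "Re v" "Re v"]
      eventually_ge_at_top[of "max 1 (1 - Re v)"]
  proof eventually_elim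
    case (elim n)
    then have n: "1 \<le> n" "0 < n + Re v" by auto
    have "norm (of_real n * 1 * integral {0..X} (S_integrand n 1 v)) \<le> 2 * n * exp \<bar>Re v\<bar> + 1"
      if "2 \<le> X" for X
      using norm_integral_S_integrand_1_le[OF n elim(1) that] elim(2) by (simp add: q_def)
    then show "norm (F_fun n 1 v) \<le> 2 * n * exp \<bar>Re v\<bar> + 1"
      using n by (intro tendsto_upperbound[OF tendsto_norm[OF tendsto_F_fun_integral]]
                    eventually_mono[OF eventually_ge_at_top[of 2]]) auto
  qed
qed

section \<open>Growth of F\<close>

lemma norm_F_fun:
  assumes w: "w \<noteq> 0"
  shows "norm (F_fun n w v) = norm (F_fun n 1 v) * exp (- Re (v * Ln w)) * exp (- n * ln (norm (w * exp (1 - w))))"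
proof -
  have eq: "F_fun n w v = F_fun n 1 v * exp (of_real n * (w - 1)) * exp (- (of_real n + v) * Ln w)"
    unfolding F_fun_def by (simp add: exp_add[symmetric] algebra_simps)
  have "norm (w * exp (1 - w)) = norm w * exp (1 - Re w)" by (simp add: norm_mult norm_exp_eq_Re)
  then have ln_rho: "ln (norm (w * exp (1 - w))) = ln (norm w) + (1 - Re w)" using w by (simp add: ln_mult)
  have "norm (exp (- (of_real n + v) * Ln w)) = exp (- (n * ln (norm w)) - Re (v * Ln w))"
    using w by (simp add: norm_exp_eq_Re algebra_simps Re_Ln)
  moreover have "norm (exp (of_real n * (w - 1))) = exp (n * (Re w - 1))" by (simp add: norm_exp_eq_Re)
  ultimately have "norm (F_fun n w v)
      = norm (F_fun n 1 v) * (exp (n * (Re w - 1)) * exp (- (n * ln (norm w)) - Re (v * Ln w)))"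
    unfolding eq by (simp add: norm_mult)
  also have "exp (n * (Re w - 1)) * exp (- (n * ln (norm w)) - Re (v * Ln w))
           = exp (- Re (v * Ln w)) * exp (- n * ln (norm (w * exp (1 - w))))"
    unfolding ln_rho by (simp add: exp_add[symmetric] algebra_simps)
  finally show ?thesis by (simp add: mult.assoc)
qed

lemma filterlim_norm_F_fun_1: "filterlim (\<lambda>n. norm (F_fun n 1 v)) at_top at_top"
proof -
  have "filterlim (\<lambda>n. Re (S_fun n 1 v) + Re (T_fun n 1 v)) at_top at_top"
    by (rule filterlim_at_top_add_at_top[OF filterlim_Re_S_fun_1 filterlim_Re_T_fun_1])
  then have "filterlim (\<lambda>n. Re (F_fun n 1 v)) at_top at_top"
    by (simp flip: S_fun_add_T_fun)
  then show ?thesis by (rule filterlim_norm_if_filterlim_Re)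
qed

lemma filterlim_norm_F_fun:
  assumes w: "w \<noteq> 0" and rho: "norm (w * exp (1 - w)) \<le> 1"
  shows "filterlim (\<lambda>n. norm (F_fun n w v)) at_top at_top"
proof (rule filterlim_at_top_mono)
  define K where "K = exp (- Re (v * Ln w))"
  show "filterlim (\<lambda>n. K * norm (F_fun n 1 v)) at_top at_top"
    by (rule filterlim_tendsto_pos_mult_at_top[OF tendsto_const _ filterlim_norm_F_fun_1]) (simp add: K_def)
  have ln_rho: "ln (norm (w * exp (1 - w))) \<le> 0" using w rho by (simp add: norm_mult)
  have bound: "K * norm (F_fun n 1 v) \<le> norm (F_fun n w v)" if "0 < n" for n
  proof -
    have "1 \<le> exp (- n * ln (norm (w * exp (1 - w))))"
      using that ln_rho by (simp add: mult_nonneg_nonpos)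
    then have "K * norm (F_fun n 1 v) * 1 \<le> K * norm (F_fun n 1 v) * exp (- n * ln (norm (w * exp (1 - w))))"
      by (intro mult_left_mono) (auto simp: K_def)
    also have "\<dots> = norm (F_fun n w v)" by (simp add: norm_F_fun[OF w] K_def mult_ac)
    finally show ?thesis by simp
  qed
  show "\<forall>\<^sub>F n in at_top. K * norm (F_fun n 1 v) \<le> norm (F_fun n w v)"
    by (rule eventually_mono[OF eventually_gt_at_top[of 0] bound])
qed

lemma Bfun_F_fun:
  assumes w: "w \<noteq> 0" and rho: "1 < norm (w * exp (1 - w))"
  shows "Bfun (\<lambda>n. F_fun n w v) at_top"
proof -
  define K where "K = exp (- Re (v * Ln w))"
  define l where "l = ln (norm (w * exp (1 - w)))"
  have l: "0 < l" unfolding l_def using rho by (rule ln_gt_zero)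
  have "((\<lambda>n. (2 * n * exp \<bar>Re v\<bar> + 1) * K * exp (- n * l)) \<longlongrightarrow> 0) at_top"
    using l by real_asymp
  from order_tendstoD(2)[OF this, of 1]
  have "\<forall>\<^sub>F n in at_top. (2 * n * exp \<bar>Re v\<bar> + 1) * K * exp (- n * l) \<le> 1"
    by (auto elim: eventually_mono)
  then have "\<forall>\<^sub>F n in at_top. norm (F_fun n w v) \<le> 1"
    using norm_F_fun_1_le[of v]
  proof eventually_elim
    case (elim n)
    have "norm (F_fun n w v) = norm (F_fun n 1 v) * K * exp (- n * l)"
      by (simp add: norm_F_fun[OF w] K_def l_def)
    also have "\<dots> \<le> (2 * n * exp \<bar>Re v\<bar> + 1) * K * exp (- n * l)"
      using elim by (intro mult_right_mono) (auto simp: K_def)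
    also have "\<dots> \<le> 1" using elim by blast
    finally show ?case .
  qed
  then show ?thesis by (rule BfunI)
qed

lemma Bfun_F_fun_iff:
  assumes "w \<noteq> 0"
  shows "Bfun (\<lambda>n. F_fun n w v) at_top \<longleftrightarrow> 1 < norm (w * exp (1 - w))"
  using Bfun_F_fun[OF assms] not_Bfun_if_filterlim_norm[OF filterlim_norm_F_fun[OF assms]]
  by fastforce

lemma one_less_norm_mult_exp_if_Re_1:
  assumes "Re w = 1" "w \<noteq> 1"
  shows "1 < norm (w * exp (1 - w))"
proof -
  have "Im w \<noteq> 0" using assms by (auto simp: complex_eq_iff)
  then have "1 < (norm w)^2" using assms by (simp add: cmod_power2)
  then have "1 < norm w" by (smt (verit) norm_ge_zero one_le_power power_le_one)
  then show ?thesis using assms by (simp add: norm_mult norm_exp_eq_Re)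
qed

lemma Bfun_S_fun_iff:
  "Bfun (\<lambda>n. S_fun n w v) at_top \<longleftrightarrow> Re w < 1 \<or> 1 < norm (w * exp (1 - w))"
proof -
  consider "w = 1" | "Re w < 1 \<or> Re w = 1 \<and> w \<noteq> 1" | "1 < Re w" by fastforce
  then show ?thesis
  proof cases
    case 1
    then show ?thesis
      using not_Bfun_if_filterlim_norm[OF filterlim_norm_if_filterlim_Re[OF filterlim_Re_S_fun_1]] by simp
  next
    case 2
    then show ?thesis
      using Bfun_S_fun_if_Re_less_1 Bfun_S_fun_if_Re_1 one_less_norm_mult_exp_if_Re_1 by blast
  next
    case 3
    then have "Bfun (\<lambda>n. S_fun n w v) at_top \<longleftrightarrow> Bfun (\<lambda>n. F_fun n w v) at_top"
      using Bfun_add_iff[where f = "\<lambda>n. S_fun n w v", OF Bfun_T_fun_if_Re_greater_1[OF 3, of v]]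
      by (simp add: S_fun_add_T_fun)
    also have "\<dots> \<longleftrightarrow> 1 < norm (w * exp (1 - w))" using 3 by (intro Bfun_F_fun_iff) auto
    finally show ?thesis using 3 by simp
  qed
qed

lemma Bfun_T_fun_iff:
  assumes "w \<noteq> 0"
  shows "Bfun (\<lambda>n. T_fun n w v) at_top \<longleftrightarrow> 1 < Re w \<or> 1 < norm (w * exp (1 - w))"
proof -
  consider "w = 1" | "Re w < 1 \<or> Re w = 1 \<and> w \<noteq> 1" | "1 < Re w" by fastforce
  then show ?thesis
  proof cases
    case 1
    then show ?thesis
      using not_Bfun_if_filterlim_norm[OF filterlim_norm_if_filterlim_Re[OF filterlim_Re_T_fun_1]] by simp
  next
    case 2
    then have "Bfun (\<lambda>n. S_fun n w v) at_top"
      using Bfun_S_fun_if_Re_less_1 Bfun_S_fun_if_Re_1 by blast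
    moreover have "(\<lambda>n. T_fun n w v + S_fun n w v) = (\<lambda>n. F_fun n w v)"
      by (rule ext) (metis S_fun_add_T_fun add.commute)
    ultimately have "Bfun (\<lambda>n. T_fun n w v) at_top \<longleftrightarrow> Bfun (\<lambda>n. F_fun n w v) at_top"
      using Bfun_add_iff[where f = "\<lambda>n. T_fun n w v"] by metis
    also have "\<dots> \<longleftrightarrow> 1 < norm (w * exp (1 - w))" using assms by (rule Bfun_F_fun_iff)
    finally show ?thesis using 2 by auto
  next
    case 3
    then show ?thesis using Bfun_T_fun_if_Re_greater_1 by blast
  qed
qed

lemma mem_regX_regY_regS_iff: "w \<in> regX \<union> regY \<union> regS \<longleftrightarrow> Re w < 1 \<or> 1 < norm (w * exp (1 - w))"
  unfolding regX_def regY_def regS_def by auto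

lemma mem_regX_regZ_regT_iff: "w \<in> regX \<union> regZ \<union> regT \<longleftrightarrow> 1 < Re w \<or> 1 < norm (w * exp (1 - w))"
  unfolding regX_def regZ_def regT_def by auto

theorem corollary5p5:
  fixes w v :: complex
  shows "((\<exists>B. \<forall>\<^sub>F n in at_top. norm (S_fun n w v) \<le> B) \<longleftrightarrow> w \<in> regX \<union> regY \<union> regS)
       \<and> (w \<noteq> 0 \<longrightarrow>
          ((\<exists>B. \<forall>\<^sub>F n in at_top. norm (T_fun n w v) \<le> B) \<longleftrightarrow> w \<in> regX \<union> regZ \<union> regT))"
  using Bfun_S_fun_iff[of w v] Bfun_T_fun_iff[of w v] mem_regX_regY_regS_iff mem_regX_regZ_regT_iff
  by (simp add: Bfun_iff_eventually_norm_le)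

end
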